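(* Let $n$ be a nonnegative integer, let $p,q$ be nonnegative integers, and let $a,c,a_1,\dots,a_p,b_1,\dots,b_q,x\in\mathbb{C}$ be such that none of $a,\,1+a-c,\,c,\,b_1,\dots,b_q$ is zero or a negative integer. Then \[ {}_{p+3}F_{q+3}\!\left(\left.{-n,\frac{a}{2},\frac{a+1}{2},a_1,\ldots,a_p \atop a,1+a-c,c,b_1,\ldots,b_q}\right| x\right) =\sum_{m=0}^n \frac{(-n)_m(a_1)_m\cdots(a_p)_m\left(\frac{x}{4}\right)^m}{m!\,(1+a-c)_m(b_1)_m\cdots(b_q)_m}\; {}_{p+1}F_{q+1}\!\left(\left.{-n+m,a_1+m,\ldots,a_p+m \atop c,b_1+m,\ldots,b_q+m}\right| \frac{x}{4}\right). \]
   Context: For $a\in\mathbb{C}$, the rising factorial is $(a)_0=1$ and $(a)_k=a(a+1)\cdots(a+k-1)$ for $k\ge1$. For nonnegative integers $r,s$, the hypergeometric series is ${}_rF_s\!\left(\left.{\alpha_1,\ldots,\alpha_r\atop \beta_1,\ldots,\beta_s}\right|z\right)=\sum_{k\ge0}\frac{(\alpha_1)_k\cdots(\alpha_r)_k}{k!(\beta_1)_k\cdots(\beta_s)_k}z^k$, where no lower parameter $\beta_j$ is zero or a negative integer. If some upper parameter equals $-n$ with $n$ a nonnegative integer, the series terminates (is a finite sum over $0\le k\le n$). *)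

theory Defs
  imports "HOL-Analysis.Analysis"
begin

text \<open>In the terminating case
  only finitely many terms are nonzero, so the sum is a finite sum.\<close>

definition hyp_term :: "complex list \<Rightarrow> complex list \<Rightarrow> complex \<Rightarrow> nat \<Rightarrow> complex" where
  "hyp_term us ls z k =
     (\<Prod>u\<leftarrow>us. pochhammer u k) * z ^ k / (fact k * (\<Prod>l\<leftarrow>ls. pochhammer l k))"

definition hypF :: "complex list \<Rightarrow> complex list \<Rightarrow> complex \<Rightarrow> complex" where
  "hypF us ls z = (\<Sum>k. hyp_term us ls z k)"

end

theory Submission
  imports Defs "HOL-Computational_Algebra.Formal_Power_Series"
begin

text \<open>By the duplication formula, \<open>(a/2)\<^sub>k ((a+1)/2)\<^sub>k = (a)\<^sub>k (a+k)\<^sub>k / 4\<^sup>k\<close>, so the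
  \<open>k\<close>-th term of the left-hand side is the \<open>k\<close>-th term of the series with parameters
  \<open>-n, a\<^sub>1, ..., a\<^sub>p; b\<^sub>1, ..., b\<^sub>q\<close> at \<open>x/4\<close>, multiplied by
  \<open>(a+k)\<^sub>k / (k! (1+a-c)\<^sub>k (c)\<^sub>k)\<close>. Since \<open>a+2k-1 = (c+k-1) + (1+a-c+k-1)\<close>,
  Chu-Vandermonde expands this factor as
  \<open>\<Sum>\<^sub>m 1 / (m! (k-m)! (1+a-c)\<^sub>m (c)\<^sub>k\<^sub>-\<^sub>m)\<close>. Both sides are then the same finite double
  sum over \<open>m + j \<le> n\<close>, summed by diagonals on the left and by rows on the right, because
  \<open>(u)\<^sub>m\<^sub>+\<^sub>j = (u)\<^sub>m (u+m)\<^sub>j\<close> splits each term into the \<open>m\<close>-th outer coefficient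
  times the \<open>j\<close>-th term of the inner series.\<close>

lemma sum_atMost_triangle:
  fixes g :: "nat \<Rightarrow> nat \<Rightarrow> 'a::comm_monoid_add"
  shows "(\<Sum>i\<le>n. \<Sum>j\<le>n - i. g i j) = (\<Sum>k\<le>n. \<Sum>i\<le>k. g i (k - i))"
proof -
  have "(\<Sum>i\<le>n. \<Sum>j\<le>n - i. g i j) = (\<Sum>(i, j)\<in>{(i, j). i + j \<le> n}. g i j)"
    by (subst sum.Sigma) (auto intro!: sum.cong)
  also have "\<dots> = (\<Sum>k\<le>n. \<Sum>i\<le>k. g i (k - i))"
    by (rule sum.triangle_reindex_eq)
  finally show ?thesis .
qed

lemma pochhammer_double_halves:
  fixes a :: "'a::field_char_0"
  shows "pochhammer a k * pochhammer (a + of_nat k) k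
    = 4 ^ k * pochhammer (a / 2) k * pochhammer ((a + 1) / 2) k"
proof -
  have "pochhammer a k * pochhammer (a + of_nat k) k = pochhammer a (2 * k)"
    by (simp add: mult_2 pochhammer_product')
  also have "\<dots> = 4 ^ k * pochhammer (a / 2) k * pochhammer ((a + 1) / 2) k"
    using pochhammer_double[of "a / 2" k] by (simp add: power_mult add_divide_distrib)
  finally show ?thesis .
qed

lemma pochhammer_Vandermonde:
  fixes u c :: "'a::field_char_0"
  assumes "pochhammer u k \<noteq> 0" and "pochhammer c k \<noteq> 0"
  shows "pochhammer (u + c + of_nat k - 1) k / (fact k * pochhammer u k * pochhammer c k)
    = (\<Sum>m\<le>k. 1 / (fact m * fact (k - m) * pochhammer u m * pochhammer c (k - m)))"
proof -
  define U where "U = u + of_nat k - 1"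
  define C where "C = c + of_nat k - 1"
  have summand: "(C gchoose m) * (U gchoose (k - m)) / (pochhammer u k * pochhammer c k)
      = 1 / (fact m * fact (k - m) * pochhammer u m * pochhammer c (k - m))" if "m \<le> k" for m
  proof -
    have C: "C gchoose m = pochhammer (c + of_nat (k - m)) m / fact m"
      unfolding gbinomial_pochhammer' C_def using that by (simp add: of_nat_diff algebra_simps)
    have U: "U gchoose (k - m) = pochhammer (u + of_nat m) (k - m) / fact (k - m)"
      unfolding gbinomial_pochhammer' U_def using that by (simp add: of_nat_diff algebra_simps)
    have u: "pochhammer u k = pochhammer u m * pochhammer (u + of_nat m) (k - m)"
      using pochhammer_product'[of u m "k - m"] that by simp
    have c: "pochhammer c k = pochhammer c (k - m) * pochhammer (c + of_nat (k - m)) m"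
      using pochhammer_product'[of c "k - m" m] that by simp
    show ?thesis using assms unfolding U C u c by (simp add: field_simps)
  qed
  have "(C + U) gchoose k = pochhammer (u + c + of_nat k - 1) k / fact k"
    unfolding gbinomial_pochhammer' U_def C_def by (simp add: algebra_simps)
  then have "pochhammer (u + c + of_nat k - 1) k / (fact k * pochhammer u k * pochhammer c k)
      = (\<Sum>m\<le>k. (C gchoose m) * (U gchoose (k - m))) / (pochhammer u k * pochhammer c k)"
    using gbinomial_Vandermonde[of C U k] assms by (simp add: field_simps atLeast0AtMost)
  also have "\<dots> = (\<Sum>m\<le>k. 1 / (fact m * fact (k - m) * pochhammer u m * pochhammer c (k - m)))"
    unfolding sum_divide_distrib by (rule sum.cong) (simp_all add: summand)
  finally show ?thesis .
qed

definition pochhammer_ratio :: "'a::field list \<Rightarrow> 'a list \<Rightarrow> 'a \<Rightarrow> nat \<Rightarrow> 'a" where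
  "pochhammer_ratio us ls z k = (\<Prod>u\<leftarrow>us. pochhammer u k) * z ^ k / (\<Prod>l\<leftarrow>ls. pochhammer l k)"

lemma hyp_term_eq_pochhammer_ratio: "hyp_term us ls z k = pochhammer_ratio us ls z k / fact k"
  by (simp add: hyp_term_def pochhammer_ratio_def)

lemma pochhammer_ratio_Cons_lower:
  "pochhammer_ratio us (l # ls) z k = pochhammer_ratio us ls z k / pochhammer l k"
  by (simp add: pochhammer_ratio_def)

lemma prod_list_pochhammer_add:
  "(\<Prod>u\<leftarrow>us. pochhammer u (m + j))
    = (\<Prod>u\<leftarrow>us. pochhammer u m) * (\<Prod>u\<leftarrow>us. pochhammer (u + of_nat m) j)"
  by (induction us) (simp_all add: pochhammer_product' mult_ac)

lemma pochhammer_ratio_add: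
  "pochhammer_ratio us ls z (m + j)
    = pochhammer_ratio us ls z m
      * pochhammer_ratio (map (\<lambda>u. u + of_nat m) us) (map (\<lambda>l. l + of_nat m) ls) z j"
  by (simp add: pochhammer_ratio_def prod_list_pochhammer_add power_add o_def)

lemma hypF_terminating:
  "hypF (- of_nat N # us) ls z = (\<Sum>k\<le>N. hyp_term (- of_nat N # us) ls z k)"
  unfolding hypF_def by (rule suminf_finite) (auto simp: hyp_term_def pochhammer_of_nat_eq_0_iff)

lemma hyp_term_halves_eq_convolution:
  fixes a c x :: complex
  assumes "pochhammer a k \<noteq> 0" "pochhammer (1 + a - c) k \<noteq> 0" "pochhammer c k \<noteq> 0"
  shows "hyp_term (a / 2 # (a + 1) / 2 # us) (a # (1 + a - c) # c # ls) x k
    = (\<Sum>m\<le>k. pochhammer_ratio us ls (x / 4) k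
        / (fact m * fact (k - m) * pochhammer (1 + a - c) m * pochhammer c (k - m)))"
proof -
  define u where "u = 1 + a - c"
  have "hyp_term (a / 2 # (a + 1) / 2 # us) (a # u # c # ls) x k
      = pochhammer_ratio us ls (x / 4) k * (4 ^ k * pochhammer (a / 2) k * pochhammer ((a + 1) / 2) k)
        / (fact k * pochhammer a k * pochhammer u k * pochhammer c k)"
    unfolding hyp_term_def pochhammer_ratio_def by (simp add: field_simps power_divide)
  also have "\<dots> = pochhammer_ratio us ls (x / 4) k
      * (pochhammer (u + c + of_nat k - 1) k / (fact k * pochhammer u k * pochhammer c k))"
    using assms(1) by (simp add: u_def flip: pochhammer_double_halves)
  also have "\<dots> = (\<Sum>m\<le>k. pochhammer_ratio us ls (x / 4) k
        / (fact m * fact (k - m) * pochhammer u m * pochhammer c (k - m)))"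
    using pochhammer_Vandermonde[OF assms(2,3)[folded u_def]] by (simp add: sum_distrib_left)
  finally show ?thesis
    unfolding u_def .
qed

lemma pochhammer_ratio_mult_hyp_term_shift:
  "pochhammer_ratio us ls z m / (fact m * pochhammer u m)
     * hyp_term (map (\<lambda>v. v + of_nat m) us) (c # map (\<lambda>l. l + of_nat m) ls) z j
   = pochhammer_ratio us ls z (m + j) / (fact m * fact j * pochhammer u m * pochhammer c j)"
  by (simp add: hyp_term_eq_pochhammer_ratio pochhammer_ratio_Cons_lower pochhammer_ratio_add)

theorem proposition3p1:
  fixes n :: nat and a c x :: complex and as bs :: "complex list"
  assumes "a \<notin> \<int>\<^sub>\<le>\<^sub>0" and "1 + a - c \<notin> \<int>\<^sub>\<le>\<^sub>0" and "c \<notin> \<int>\<^sub>\<le>\<^sub>0"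
    and "\<forall>b\<in>set bs. b \<notin> \<int>\<^sub>\<le>\<^sub>0"
  shows "hypF ([- of_nat n, a / 2, (a + 1) / 2] @ as) ([a, 1 + a - c, c] @ bs) x =
    (\<Sum>m = 0..n.
       pochhammer (- of_nat n) m * (\<Prod>ai\<leftarrow>as. pochhammer ai m) * (x / 4) ^ m /
         (fact m * pochhammer (1 + a - c) m * (\<Prod>bi\<leftarrow>bs. pochhammer bi m))
       * hypF ((- of_nat n + of_nat m) # map (\<lambda>ai. ai + of_nat m) as)
              (c # map (\<lambda>bi. bi + of_nat m) bs) (x / 4))"
    (is "_ = (\<Sum>m = 0..n. ?summand m)")
proof -
  define F where "F m j = pochhammer_ratio (- of_nat n # as) bs (x / 4) (m + j)
    / (fact m * fact j * pochhammer (1 + a - c) m * pochhammer c j)" for m j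
  have nonzero: "pochhammer z k \<noteq> 0" if "z \<notin> \<int>\<^sub>\<le>\<^sub>0" for z :: complex and k
    using that pochhammer_eq_0_imp_nonpos_Int by blast
  have lhs_term: "hyp_term ([- of_nat n, a / 2, (a + 1) / 2] @ as) ([a, 1 + a - c, c] @ bs) x k
      = (\<Sum>m\<le>k. F m (k - m))" for k
  proof -
    have "hyp_term ([- of_nat n, a / 2, (a + 1) / 2] @ as) ([a, 1 + a - c, c] @ bs) x k
        = hyp_term (a / 2 # (a + 1) / 2 # - of_nat n # as) (a # (1 + a - c) # c # bs) x k"
      by (simp add: hyp_term_def mult_ac)
    then show ?thesis
      using hyp_term_halves_eq_convolution[OF nonzero nonzero nonzero, OF assms(1-3)]
      by (simp add: F_def)
  qed
  have rhs_summand: "?summand m = (\<Sum>j\<le>n - m. F m j)" if "m \<le> n" for m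
  proof -
    have "- of_nat n + of_nat m = - (of_nat (n - m) :: complex)"
      using that by (simp add: of_nat_diff)
    then have "?summand m = pochhammer_ratio (- of_nat n # as) bs (x / 4) m / (fact m * pochhammer (1 + a - c) m)
        * (\<Sum>j\<le>n - m. hyp_term (map (\<lambda>v. v + of_nat m) (- of_nat n # as))
            (c # map (\<lambda>l. l + of_nat m) bs) (x / 4) j)"
      by (simp add: hypF_terminating pochhammer_ratio_def mult_ac)
    then show ?thesis
      by (simp only: sum_distrib_left pochhammer_ratio_mult_hyp_term_shift F_def)
  qed
  have "hypF ([- of_nat n, a / 2, (a + 1) / 2] @ as) ([a, 1 + a - c, c] @ bs) x
      = (\<Sum>k\<le>n. \<Sum>m\<le>k. F m (k - m))"
    using hypF_terminating[of n "[a / 2, (a + 1) / 2] @ as"] lhs_term by simp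
  also have "\<dots> = (\<Sum>m\<le>n. \<Sum>j\<le>n - m. F m j)"
    by (rule sum_atMost_triangle[symmetric])
  also have "\<dots> = (\<Sum>m = 0..n. ?summand m)"
    unfolding atLeast0AtMost by (rule sum.cong) (simp_all only: rhs_summand atMost_iff)
  finally show ?thesis .
qed

end
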